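(* Let $H_<$ be an ordered graph and let $\delta>0$. There exists a constant $c_2=c_2(H_<,\delta)>0$ such that every ordered graph $G_<$ on $n$ vertices that does not contain $H_<$ as an induced ordered subgraph has a subset $U\subset V(G)$ with $|U|\ge c_2 n$ such that either $\Delta(G[U])\le \delta|U|$ or $\Delta(\overline{G}[U])\le \delta |U|$.
   Context: An ordered graph $G_<$ is a graph with a total ordering $<$ of its vertex set. $H_{<'}$ is an induced ordered subgraph of $G_<$ if there is an injection $\phi:V(H)\to V(G)$ with $u<'v\Rightarrow \phi(u)<\phi(v)$ and $uv\in E(H)\iff\phi(u)\phi(v)\in E(G)$. $G[U]$ is the induced subgraph on $U$, $\overline{G}$ the complement of $G$, and $\Delta$ the maximum degree. *)

theory Defs
  imports Complex_Main
begin

text \<open>An ordered graph on n vertices: vertex set {0..<n} ordered by the natural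
order of nat, edges given by a symmetric, irreflexive relation E on {0..<n}.\<close>
definition ograph :: "nat \<Rightarrow> (nat \<Rightarrow> nat \<Rightarrow> bool) \<Rightarrow> bool" where
  "ograph n E \<longleftrightarrow> (\<forall>u<n. \<forall>v<n. E u v = E v u) \<and> (\<forall>u<n. \<not> E u u)"

definition induced_ord_sub ::
  "nat \<Rightarrow> (nat \<Rightarrow> nat \<Rightarrow> bool) \<Rightarrow> nat \<Rightarrow> (nat \<Rightarrow> nat \<Rightarrow> bool) \<Rightarrow> bool" where
  "induced_ord_sub k EH n EG \<longleftrightarrow>
     (\<exists>\<phi>. (\<forall>u<k. \<phi> u < n) \<and>
          (\<forall>u<k. \<forall>v<k. u < v \<longrightarrow> \<phi> u < \<phi> v) \<and>
          (\<forall>u<k. \<forall>v<k. u \<noteq> v \<longrightarrow> (EH u v \<longleftrightarrow> EG (\<phi> u) (\<phi> v))))"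

definition deg_in :: "(nat \<Rightarrow> nat \<Rightarrow> bool) \<Rightarrow> nat set \<Rightarrow> nat \<Rightarrow> nat" where
  "deg_in E U u = card {v \<in> U. v \<noteq> u \<and> E u v}"

definition max_deg_in :: "(nat \<Rightarrow> nat \<Rightarrow> bool) \<Rightarrow> nat set \<Rightarrow> nat" where
  "max_deg_in E U = (if U = {} then 0 else Max (deg_in E U ` U))"

definition compl_graph :: "(nat \<Rightarrow> nat \<Rightarrow> bool) \<Rightarrow> nat \<Rightarrow> nat \<Rightarrow> bool" where
  "compl_graph E u v \<longleftrightarrow> u \<noteq> v \<and> \<not> E u v"

end

(* If G is H-free, every large vertex set W contains disjoint sets A, B of linear size
   such that every vertex of A has at most e|B| neighbours, or at most e|B| non-neighbours,
   in B: otherwise H could be embedded greedily, vertex by vertex, into k consecutive blocks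
   of W. Iterating this split, with an induction on a + b in the style of the Erdos-Szekeres
   bound, yields in G or in its complement a set U made of a blocks of size p whose degree
   sum is at most (1/a + 2e)|U|^2. Deleting the vertices of more than twice the average
   degree keeps half of U and bounds the maximum degree by 4(1/a + 2e)|U|, which is at most
   delta|U| once a is about 8/delta and e = delta/16. *)

theory Submission
  imports Defs
begin

definition sparse_pair :: "(nat \<Rightarrow> nat \<Rightarrow> bool) \<Rightarrow> nat set \<Rightarrow> nat set \<Rightarrow> real \<Rightarrow> bool" where
  "sparse_pair F A B e \<longleftrightarrow> (\<forall>x\<in>A. real (card {y\<in>B. F x y}) \<le> e * real (card B))"

lemma sparse_pair_mono:
  assumes "finite B" "\<And>x y. x \<in> A \<Longrightarrow> y \<in> B \<Longrightarrow> G x y \<Longrightarrow> F x y" "sparse_pair F A B e"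
  shows "sparse_pair G A B e"
  unfolding sparse_pair_def
proof
  fix x assume x: "x \<in> A"
  have "card {y\<in>B. G x y} \<le> card {y\<in>B. F x y}"
    using assms(1,2) x by (intro card_mono) auto
  then show "real (card {y\<in>B. G x y}) \<le> e * real (card B)"
    using assms(3) x unfolding sparse_pair_def by (meson of_nat_le_iff order_trans)
qed

lemma ograph_sym:
  assumes "ograph n E" "W \<subseteq> {0..<n}"
  shows "\<forall>x\<in>W. \<forall>y\<in>W. E x y = E y x"
  using assms unfolding ograph_def by (meson atLeastLessThan_iff subsetD)

lemma ordered_blocks:
  fixes W :: "nat set"
  assumes "finite W" and "k * q \<le> card W"
  shows "\<exists>S. (\<forall>i<k. S i \<subseteq> W \<and> card (S i) = q) \<and> (\<forall>i<k. \<forall>j<k. i < j \<longrightarrow> (\<forall>x\<in>S i. \<forall>y\<in>S j. x < y))"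
proof -
  define xs where "xs = sorted_list_of_set W"
  have len: "length xs = card W" and dist: "distinct xs" and srt: "sorted_wrt (<) xs"
    and set_xs: "set xs = W"
    unfolding xs_def using assms(1) by simp_all
  have block_end: "i * q + q \<le> card W" if "i < k" for i
  proof -
    have "i * q + q = Suc i * q" by simp
    also have "\<dots> \<le> k * q" using that by (intro mult_le_mono1) simp
    finally show ?thesis using assms(2) by simp
  qed
  define S where "S i = (\<lambda>j. xs ! j) ` {i * q..<i * q + q}" for i
  show ?thesis
  proof (intro exI[of _ S] conjI allI impI ballI)
    fix i assume i: "i < k"
    show "S i \<subseteq> W" unfolding S_def using block_end[OF i] len set_xs by auto
    have "inj_on (\<lambda>j. xs ! j) {i * q..<i * q + q}"
      using dist block_end[OF i] len by (auto simp: inj_on_def nth_eq_iff_index_eq)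
    then show "card (S i) = q" unfolding S_def by (simp add: card_image)
  next
    fix i j x y assume ij: "i < k" "j < k" "i < j" and "x \<in> S i" "y \<in> S j"
    then obtain r r' where r: "r < i * q + q" "x = xs ! r" and r': "j * q \<le> r'" "r' < j * q + q" "y = xs ! r'"
      unfolding S_def by auto
    have "i * q + q \<le> j * q" using ij by (metis mult_Suc mult_le_mono1 Suc_leI add.commute)
    then have "r < r'" using r r' by simp
    moreover have "r' < length xs" using r' block_end[OF ij(2)] len by simp
    ultimately show "x < y" using sorted_wrt_nth_less[OF srt] r r' by simp
  qed
qed

lemma ordered_large_blocks:
  fixes W :: "nat set"
  assumes "finite W" "0 < k" "k \<le> card W"
  obtains S where "\<forall>i<k. S i \<subseteq> W \<and> card W \<le> 2 * k * card (S i)"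
    "\<forall>i<k. \<forall>j<k. i < j \<longrightarrow> (\<forall>x\<in>S i. \<forall>y\<in>S j. x < y)"
proof -
  define q where "q = card W div k"
  have "k * q \<le> card W" unfolding q_def by (simp add: mult.commute)
  then obtain S where S: "\<forall>i<k. S i \<subseteq> W \<and> card (S i) = q"
    and S_ord: "\<forall>i<k. \<forall>j<k. i < j \<longrightarrow> (\<forall>x\<in>S i. \<forall>y\<in>S j. x < y)"
    using ordered_blocks[OF assms(1)] by blast
  have "card W \<le> 2 * k * q"
  proof -
    have "card W = k * q + card W mod k" unfolding q_def by simp
    then have "card W < k * q + k" using mod_less_divisor[OF assms(2), of "card W"] by linarith
    moreover from this have "k \<le> k * q" using assms(3) by (cases q) auto
    ultimately show ?thesis unfolding mult.assoc by linarith
  qed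
  with S have "\<forall>i<k. S i \<subseteq> W \<and> card W \<le> 2 * k * card (S i)" by simp
  then show ?thesis using S_ord by (rule that)
qed

lemma typical_vertex:
  fixes F :: "nat \<Rightarrow> nat \<Rightarrow> bool" and B :: "nat \<Rightarrow> nat set" and c :: "nat \<Rightarrow> bool"
    and a0 e :: real
  assumes "finite A" "A \<noteq> {}" "a0 * real k \<le> real (card A)"
    and no_sparse: "\<And>j T. j < k \<Longrightarrow> T \<subseteq> A \<Longrightarrow> a0 \<le> real (card T) \<Longrightarrow>
      \<not> sparse_pair (\<lambda>x y. F x y = c j) T (B j) e"
  shows "\<exists>x\<in>A. \<forall>j<k. e * real (card (B j)) < real (card {y\<in>B j. F x y = c j})"
proof (rule ccontr)
  assume no_typical: "\<not> ?thesis"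
  define T where "T j = {x\<in>A. real (card {y\<in>B j. F x y = c j}) \<le> e * real (card (B j))}" for j
  have cover: "A \<subseteq> (\<Union>j<k. T j)"
    using no_typical by (auto simp: T_def not_less)
  have small: "real (card (T j)) < a0" if "j < k" for j
    using no_sparse[OF that, of "T j"] by (force simp: T_def sparse_pair_def)
  have "k \<noteq> 0" using cover assms(2) by auto
  have "card A \<le> card (\<Union>j<k. T j)"
    using cover assms(1) by (intro card_mono) (auto simp: T_def)
  also have "\<dots> \<le> (\<Sum>j<k. card (T j))" by (rule card_UN_le) simp
  finally have "real (card A) \<le> (\<Sum>j<k. real (card (T j)))" by (simp flip: of_nat_sum)
  also have "\<dots> < (\<Sum>j<k. a0)"
    using small \<open>k \<noteq> 0\<close> by (intro sum_strict_mono) auto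
  finally show False using assms(3) by (simp add: mult.commute)
qed

lemma typical_vertex_in_blocks:
  fixes F :: "nat \<Rightarrow> nat \<Rightarrow> bool" and c :: "nat \<Rightarrow> bool" and e a0 :: real
  assumes "finite W" "0 < a0"
    and no_sparse: "\<And>A B b. A \<subseteq> W \<Longrightarrow> B \<subseteq> W \<Longrightarrow> A \<inter> B = {} \<Longrightarrow>
      a0 \<le> real (card A) \<Longrightarrow> a0 \<le> real (card B) \<Longrightarrow> \<not> sparse_pair (\<lambda>x y. F x y = b) A B e"
    and S_W: "\<forall>i<Suc k. S i \<subseteq> W"
    and S_ord: "\<forall>i<Suc k. \<forall>j<Suc k. i < j \<longrightarrow> (\<forall>x\<in>S i. \<forall>y\<in>S j. x < y)"
    and S_card: "\<And>i. i < Suc k \<Longrightarrow> a0 * real (Suc k) \<le> real (card (S i))"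
  shows "\<exists>x\<in>S 0. \<forall>j<k. e * real (card (S (Suc j))) < real (card {y\<in>S (Suc j). F x y = c j})"
proof -
  have a0_le: "a0 * real k \<le> a0 * real (Suc k)" "a0 \<le> a0 * real (Suc k)"
    using \<open>0 < a0\<close> by (simp_all add: algebra_simps)
  have "S 0 \<subseteq> W" using S_W by simp
  then have "finite (S 0)" using \<open>finite W\<close> by (rule finite_subset)
  moreover have "S 0 \<noteq> {}"
  proof
    assume "S 0 = {}"
    then show False using S_card[of 0] \<open>0 < a0\<close> by (simp add: mult_le_0_iff)
  qed
  moreover have "a0 * real k \<le> real (card (S 0))"
    using S_card[of 0] a0_le by linarith
  moreover have "\<not> sparse_pair (\<lambda>x y. F x y = c j) T (S (Suc j)) e"
    if j: "j < k" and T: "T \<subseteq> S 0" "a0 \<le> real (card T)" for j T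
  proof (rule no_sparse)
    show "T \<subseteq> W" "S (Suc j) \<subseteq> W" using S_W j T(1) by auto
    have "x < y" if "x \<in> S 0" "y \<in> S (Suc j)" for x y
      using S_ord j that by blast
    then show "T \<inter> S (Suc j) = {}" using T(1) by fastforce
    show "a0 \<le> real (card T)" by fact
    show "a0 \<le> real (card (S (Suc j)))"
      using S_card[of "Suc j"] j a0_le by simp
  qed
  ultimately show ?thesis
    by (rule typical_vertex[where B = "\<lambda>j. S (Suc j)"])
qed

lemma case_nat_embedding:
  fixes F P :: "nat \<Rightarrow> nat \<Rightarrow> bool"
  assumes P_sym: "\<forall>u<Suc k. \<forall>v<Suc k. P u v = P v u"
    and F_sym: "\<forall>j<k. F (\<phi> j) x = F x (\<phi> j)"
    and x: "\<forall>j<k. P 0 (Suc j) = F x (\<phi> j)"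
    and \<phi>: "\<forall>u<k. \<forall>v<k. u \<noteq> v \<longrightarrow> (P (Suc u) (Suc v) \<longleftrightarrow> F (\<phi> u) (\<phi> v))"
  shows "\<forall>u<Suc k. \<forall>v<Suc k. u \<noteq> v \<longrightarrow> (P u v \<longleftrightarrow> F (case_nat x \<phi> u) (case_nat x \<phi> v))"
proof (intro allI impI)
  fix u v assume uv: "u < Suc k" "v < Suc k" "u \<noteq> v"
  show "P u v \<longleftrightarrow> F (case_nat x \<phi> u) (case_nat x \<phi> v)"
  proof (cases u)
    case 0
    then obtain j where "v = Suc j" using uv by (cases v) auto
    then show ?thesis using 0 x uv by simp
  next
    case (Suc i)
    show ?thesis
    proof (cases v)
      case 0
      have "P u v = P v u" using P_sym uv by blast
      then show ?thesis using 0 Suc x F_sym uv by simp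
    next
      case (Suc j)
      then show ?thesis using \<open>u = Suc i\<close> \<phi> uv by simp
    qed
  qed
qed

lemma greedy_embedding:
  fixes F P :: "nat \<Rightarrow> nat \<Rightarrow> bool" and S :: "nat \<Rightarrow> nat set" and e a0 :: real
  assumes F_sym: "\<forall>x\<in>W. \<forall>y\<in>W. F x y = F y x" and "finite W"
    and e: "0 < e" "e \<le> 1" and "0 < a0"
    and no_sparse: "\<And>A B b. A \<subseteq> W \<Longrightarrow> B \<subseteq> W \<Longrightarrow> A \<inter> B = {} \<Longrightarrow>
      a0 \<le> real (card A) \<Longrightarrow> a0 \<le> real (card B) \<Longrightarrow> \<not> sparse_pair (\<lambda>x y. F x y = b) A B e"
    and "\<forall>u<k. \<forall>v<k. P u v = P v u"
    and "\<forall>i<k. S i \<subseteq> W"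
    and "\<forall>i<k. \<forall>j<k. i < j \<longrightarrow> (\<forall>x\<in>S i. \<forall>y\<in>S j. x < y)"
    and "\<forall>i<k. a0 * real k * (1/e)^k \<le> real (card (S i))"
  shows "\<exists>\<phi>. (\<forall>i<k. \<phi> i \<in> S i) \<and> (\<forall>u<k. \<forall>v<k. u \<noteq> v \<longrightarrow> (P u v \<longleftrightarrow> F (\<phi> u) (\<phi> v)))"
  using assms(7-10)
proof (induction k arbitrary: P S)
  case 0
  then show ?case by simp
next
  case (Suc k)
  note P_sym = Suc.prems(1) and S_W = Suc.prems(2) and S_ord = Suc.prems(3)
  have S_card: "a0 * real (Suc k) \<le> real (card (S i))" if "i < Suc k" for i
  proof -
    have "1 \<le> (1/e)^Suc k" using e by (intro one_le_power) simp
    then have "a0 * real (Suc k) * 1 \<le> a0 * real (Suc k) * (1/e)^Suc k"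
      using \<open>0 < a0\<close> by (intro mult_left_mono) auto
    then show ?thesis using Suc.prems(4) that by fastforce
  qed
  obtain x where x: "x \<in> S 0"
    and x_typical: "\<forall>j<k. e * real (card (S (Suc j))) < real (card {y\<in>S (Suc j). F x y = P 0 (Suc j)})"
    using typical_vertex_in_blocks[where c = "\<lambda>j. P 0 (Suc j)", OF \<open>finite W\<close> \<open>0 < a0\<close> no_sparse S_W S_ord S_card]
    by blast
  define S' where "S' j = {y\<in>S (Suc j). F x y = P 0 (Suc j)}" for j
  have "a0 * real k * (1/e)^k \<le> real (card (S' j))" if "j < k" for j
  proof -
    have "a0 * real k * (1/e)^k \<le> a0 * real (Suc k) * (1/e)^k"
      using \<open>0 < a0\<close> e by (intro mult_right_mono mult_left_mono) auto
    also have "\<dots> = e * (a0 * real (Suc k) * (1/e)^Suc k)"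
      using e by simp
    also have "\<dots> \<le> e * real (card (S (Suc j)))"
      using Suc.prems(4) that e by (intro mult_left_mono) auto
    also have "\<dots> < real (card (S' j))" using x_typical that by (simp add: S'_def)
    finally show ?thesis by simp
  qed
  moreover have "\<forall>i<k. S' i \<subseteq> W" using S_W by (auto simp: S'_def)
  moreover have "\<forall>i<k. \<forall>j<k. i < j \<longrightarrow> (\<forall>y\<in>S' i. \<forall>z\<in>S' j. y < z)"
  proof (intro allI impI ballI)
    fix i j y z assume "i < k" "j < k" "i < j" "y \<in> S' i" "z \<in> S' j"
    then show "y < z" using S_ord[rule_format, of "Suc i" "Suc j" y z] by (simp add: S'_def)
  qed
  moreover have "\<forall>u<k. \<forall>v<k. P (Suc u) (Suc v) = P (Suc v) (Suc u)" using P_sym by simp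
  ultimately obtain \<phi> where \<phi>: "\<forall>i<k. \<phi> i \<in> S' i"
    "\<forall>u<k. \<forall>v<k. u \<noteq> v \<longrightarrow> (P (Suc u) (Suc v) \<longleftrightarrow> F (\<phi> u) (\<phi> v))"
    using Suc.IH[of "\<lambda>u v. P (Suc u) (Suc v)" S'] by blast
  have \<phi>_x: "\<forall>j<k. P 0 (Suc j) = F x (\<phi> j)" using \<phi>(1) by (simp add: S'_def)
  have "x \<in> W" "\<forall>j<k. \<phi> j \<in> W" using x \<phi>(1) S_W by (auto simp: S'_def)
  then have "\<forall>j<k. F (\<phi> j) x = F x (\<phi> j)" using F_sym by blast
  then have "\<forall>u<Suc k. \<forall>v<Suc k. u \<noteq> v \<longrightarrow> (P u v \<longleftrightarrow> F (case_nat x \<phi> u) (case_nat x \<phi> v))"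
    using case_nat_embedding[OF P_sym _ \<phi>_x \<phi>(2)] by blast
  moreover have "\<forall>i<Suc k. case_nat x \<phi> i \<in> S i"
    using x \<phi>(1) by (auto simp: S'_def split: nat.split)
  ultimately show ?case by blast
qed

lemma sparse_pair_in_H_free:
  fixes e :: real
  assumes "ograph n EG" and "ograph k EH" and "\<not> induced_ord_sub k EH n EG"
    and "W \<subseteq> {0..<n}" and "0 < k" and e: "0 < e" "e \<le> 1" and "2 * k \<le> card W"
  shows "\<exists>A B b. A \<subseteq> W \<and> B \<subseteq> W \<and> A \<inter> B = {} \<and>
     e^k / (2 * real k^2) * real (card W) \<le> real (card A) \<and>
     e^k / (2 * real k^2) * real (card W) \<le> real (card B) \<and>
     sparse_pair (\<lambda>x y. EG x y = b) A B e"
proof (rule ccontr)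
  assume no_pair: "\<not> ?thesis"
  define a0 where "a0 = e^k / (2 * real k^2) * real (card W)"
  have "finite W" using \<open>W \<subseteq> {0..<n}\<close> finite_subset by blast
  have "0 < a0" unfolding a0_def using e \<open>0 < k\<close> \<open>2 * k \<le> card W\<close> by simp
  have EG_sym: "\<forall>x\<in>W. \<forall>y\<in>W. EG x y = EG y x"
    using assms(1,4) by (rule ograph_sym)
  have EH_sym: "\<forall>u<k. \<forall>v<k. EH u v = EH v u"
    using assms(2) unfolding ograph_def by auto
  obtain S where S: "\<forall>i<k. S i \<subseteq> W \<and> card W \<le> 2 * k * card (S i)"
    and S_ord: "\<forall>i<k. \<forall>j<k. i < j \<longrightarrow> (\<forall>x\<in>S i. \<forall>y\<in>S j. x < y)"
    using ordered_large_blocks[OF \<open>finite W\<close> \<open>0 < k\<close>] \<open>2 * k \<le> card W\<close> by auto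
  have S_card: "\<forall>i<k. a0 * real k * (1/e)^k \<le> real (card (S i))"
  proof (intro allI impI)
    fix i assume "i < k"
    have "real (card W) \<le> 2 * real k * real (card (S i))"
      using S \<open>i < k\<close> by (metis of_nat_le_iff of_nat_mult of_nat_numeral)
    have "a0 * real k * (1/e)^k = real (card W) / (2 * real k)"
      unfolding a0_def using e \<open>0 < k\<close> by (simp add: field_simps power2_eq_square power_one_over)
    also have "\<dots> \<le> real (card (S i))"
      using \<open>real (card W) \<le> 2 * real k * real (card (S i))\<close> \<open>0 < k\<close> by (simp add: pos_divide_le_eq mult_ac)
    finally show "a0 * real k * (1/e)^k \<le> real (card (S i))" .
  qed
  have no_sparse: "\<not> sparse_pair (\<lambda>x y. EG x y = b) A B e"
    if "A \<subseteq> W" "B \<subseteq> W" "A \<inter> B = {}" "a0 \<le> real (card A)" "a0 \<le> real (card B)" for A B b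
    using no_pair that unfolding a0_def by blast
  obtain \<phi> where \<phi>: "\<forall>i<k. \<phi> i \<in> S i" "\<forall>u<k. \<forall>v<k. u \<noteq> v \<longrightarrow> (EH u v \<longleftrightarrow> EG (\<phi> u) (\<phi> v))"
    using greedy_embedding[OF EG_sym \<open>finite W\<close> e \<open>0 < a0\<close> no_sparse EH_sym _ S_ord S_card] S
    by blast
  have "induced_ord_sub k EH n EG"
    unfolding induced_ord_sub_def
  proof (intro exI[of _ \<phi>] conjI allI impI)
    show "\<phi> u < n" if "u < k" for u using \<phi>(1) S assms(4) that by fastforce
    show "\<phi> u < \<phi> v" if "u < k" "v < k" "u < v" for u v using \<phi>(1) S_ord that by blast
  qed (use \<phi>(2) in blast)
  then show False using assms(3) by simp
qed

definition degree_sum :: "(nat \<Rightarrow> nat \<Rightarrow> bool) \<Rightarrow> nat set \<Rightarrow> nat" where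
  "degree_sum F U = (\<Sum>u\<in>U. card {v\<in>U. F u v})"

lemma degree_sum_le_card_sq:
  assumes "finite U"
  shows "degree_sum F U \<le> card U ^ 2"
proof -
  have "degree_sum F U \<le> (\<Sum>u\<in>U. card U)"
    unfolding degree_sum_def using assms by (intro sum_mono card_mono) auto
  then show ?thesis by (simp add: power2_eq_square)
qed

lemma sum_card_filter_swap:
  assumes "finite X" "finite Y" "\<forall>x\<in>X. \<forall>y\<in>Y. F x y = F y x"
  shows "(\<Sum>x\<in>X. card {y\<in>Y. F x y}) = (\<Sum>y\<in>Y. card {x\<in>X. F y x})"
proof -
  have "(\<Sum>x\<in>X. card {y\<in>Y. F x y}) = (\<Sum>x\<in>X. \<Sum>y\<in>Y. if F x y then 1 else 0)"
    using assms(2) by (simp only: card_eq_sum sum.inter_filter)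
  also have "\<dots> = (\<Sum>y\<in>Y. \<Sum>x\<in>X. if F y x then 1 else 0)"
    using assms(3) by (subst sum.swap) (intro sum.cong refl, auto)
  also have "\<dots> = (\<Sum>y\<in>Y. card {x\<in>X. F y x})"
    using assms(1) by (simp only: card_eq_sum sum.inter_filter)
  finally show ?thesis .
qed

lemma degree_sum_Un:
  assumes "finite P" "finite U" "P \<inter> U = {}" "\<forall>x\<in>P \<union> U. \<forall>y\<in>P \<union> U. F x y = F y x"
  shows "degree_sum F (P \<union> U) = degree_sum F P + 2 * (\<Sum>u\<in>P. card {v\<in>U. F u v}) + degree_sum F U"
proof -
  have split: "card {v\<in>P \<union> U. F u v} = card {v\<in>P. F u v} + card {v\<in>U. F u v}" for u
  proof -
    have "{v\<in>P \<union> U. F u v} = {v\<in>P. F u v} \<union> {v\<in>U. F u v}" by auto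
    then show ?thesis using assms(1-3) by (simp add: card_Un_disjoint disjoint_iff)
  qed
  have swap: "(\<Sum>u\<in>U. card {v\<in>P. F u v}) = (\<Sum>u\<in>P. card {v\<in>U. F u v})"
    using assms by (intro sum_card_filter_swap[symmetric]) auto
  show ?thesis
    unfolding degree_sum_def split sum.distrib sum.union_disjoint[OF assms(1-3)] swap
    by simp
qed

lemma markov_half:
  fixes f :: "'a \<Rightarrow> real"
  assumes "finite X" "\<And>x. x \<in> X \<Longrightarrow> 0 \<le> f x" "(\<Sum>x\<in>X. f x) \<le> t * real (card X)"
  shows "card X \<le> 2 * card {x\<in>X. f x \<le> 2 * t}"
proof -
  define L where "L = {x\<in>X. f x \<le> 2 * t}"
  have card_X: "card X = card L + card (X - L)"
    using assms(1) by (simp add: L_def card_Diff_subset card_mono)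
  have "2 * card (X - L) \<le> card X"
  proof (cases "X - L = {}")
    case False
    have "(\<Sum>x\<in>X - L. 2 * t) < (\<Sum>x\<in>X - L. f x)"
      using False assms(1) by (intro sum_strict_mono) (auto simp: L_def)
    then have "2 * t * real (card (X - L)) < (\<Sum>x\<in>X - L. f x)" by (simp add: mult.commute)
    also have "\<dots> \<le> (\<Sum>x\<in>X. f x)" using assms(1,2) by (intro sum_mono2) auto
    also have "\<dots> \<le> t * real (card X)" by (rule assms(3))
    finally have less: "t * (2 * real (card (X - L))) < t * real (card X)" by simp
    have "0 \<le> (\<Sum>x\<in>X. f x)" using assms(2) by (rule sum_nonneg)
    then have "0 \<le> t * real (card X)" using assms(3) by linarith
    moreover have "0 < card X" using False assms(1) by (auto simp: card_gt_0_iff)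
    ultimately have "0 \<le> t" by (simp add: zero_le_mult_iff)
    with less have "0 < t" by (cases "t = 0") auto
    then have "2 * real (card (X - L)) < real (card X)" using less by simp
    then show ?thesis by linarith
  qed (simp only: card.empty)
  then show ?thesis using card_X unfolding L_def by linarith
qed

text \<open>The bound is what survives adding the \<open>a\<close> blocks of size \<open>p\<close> one at a time, each new vertex
  having at most \<open>2e|U|\<close> neighbours in the current set \<open>U\<close>.\<close>
definition sparse_set :: "(nat \<Rightarrow> nat \<Rightarrow> bool) \<Rightarrow> real \<Rightarrow> nat \<Rightarrow> nat \<Rightarrow> nat set \<Rightarrow> bool" where
  "sparse_set F e p a U \<longleftrightarrow>
     card U = a * p \<and> real (degree_sum F U) \<le> (real a + 2 * e * real a^2) * real p^2"

lemma sparse_set_empty: "sparse_set F e p 0 {}"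
  by (simp add: sparse_set_def degree_sum_def)

lemma low_degree_subset:
  fixes F :: "nat \<Rightarrow> nat \<Rightarrow> bool" and e :: real
  assumes F_sym: "\<forall>x\<in>U. \<forall>y\<in>B. F x y = F y x"
    and "finite U" "finite B" "sparse_pair F U B e" "2 * p \<le> card B"
  shows "\<exists>P\<subseteq>B. card P = p \<and> (\<forall>b\<in>P. real (card {v\<in>U. F b v}) \<le> 2 * (e * real (card U)))"
proof -
  have "(\<Sum>b\<in>B. card {v\<in>U. F b v}) = (\<Sum>u\<in>U. card {b\<in>B. F u b})"
    using F_sym by (intro sum_card_filter_swap[OF assms(3,2)]) auto
  then have "(\<Sum>b\<in>B. real (card {v\<in>U. F b v})) = (\<Sum>u\<in>U. real (card {b\<in>B. F u b}))"
    unfolding of_nat_sum[symmetric] by (rule arg_cong)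
  also have "\<dots> \<le> (\<Sum>u\<in>U. e * real (card B))"
    using assms(4) by (intro sum_mono) (auto simp: sparse_pair_def)
  also have "\<dots> = e * real (card U) * real (card B)" by simp
  finally have "card B \<le> 2 * card {b\<in>B. real (card {v\<in>U. F b v}) \<le> 2 * (e * real (card U))}"
    using assms(3) by (intro markov_half) auto
  then have "p \<le> card {b\<in>B. real (card {v\<in>U. F b v}) \<le> 2 * (e * real (card U))}"
    using assms(5) by linarith
  then obtain P where "P \<subseteq> {b\<in>B. real (card {v\<in>U. F b v}) \<le> 2 * (e * real (card U))}" "card P = p"
    by (rule obtain_subset_with_card_n)
  then show ?thesis by blast
qed

lemma sparse_set_extend:
  fixes F :: "nat \<Rightarrow> nat \<Rightarrow> bool" and e :: real
  assumes F_sym: "\<forall>x\<in>A \<union> B. \<forall>y\<in>A \<union> B. F x y = F y x"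
    and "finite A" "finite B" "A \<inter> B = {}" "sparse_pair F A B e" "0 \<le> e"
    and "U \<subseteq> A" "sparse_set F e p a U" "2 * p \<le> card B"
  shows "\<exists>U'. U' \<subseteq> A \<union> B \<and> sparse_set F e p (Suc a) U'"
proof -
  have "finite U" using assms(2,7) finite_subset by blast
  have card_U: "card U = a * p" using assms(8) by (simp add: sparse_set_def)
  have "sparse_pair F U B e" using assms(5,7) by (auto simp: sparse_pair_def)
  then obtain P where P: "P \<subseteq> B" "card P = p"
    and P_deg: "\<forall>b\<in>P. real (card {v\<in>U. F b v}) \<le> 2 * (e * real (card U))"
    using low_degree_subset[OF _ \<open>finite U\<close> assms(3) _ assms(9)] F_sym assms(7) by blast
  have "finite P" using P(1) assms(3) finite_subset by blast
  have "P \<inter> U = {}" using P(1) assms(4,7) by auto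
  have "real (\<Sum>u\<in>P. card {v\<in>U. F u v}) \<le> (\<Sum>u\<in>P. 2 * (e * real (card U)))"
    unfolding of_nat_sum using P_deg by (intro sum_mono) auto
  then have cross: "real (\<Sum>u\<in>P. card {v\<in>U. F u v}) \<le> 2 * e * real a * real p^2"
    using P(2) card_U by (simp add: power2_eq_square mult_ac)
  have D_P: "real (degree_sum F P) \<le> real p^2"
    using degree_sum_le_card_sq[OF \<open>finite P\<close>] P(2) by (metis of_nat_le_iff of_nat_power)
  have D_U: "real (degree_sum F U) \<le> (real a + 2 * e * real a^2) * real p^2"
    using assms(8) by (simp add: sparse_set_def)
  have "degree_sum F (P \<union> U) = degree_sum F P + 2 * (\<Sum>u\<in>P. card {v\<in>U. F u v}) + degree_sum F U"
    using F_sym P(1) assms(7) by (intro degree_sum_Un[OF \<open>finite P\<close> \<open>finite U\<close> \<open>P \<inter> U = {}\<close>]) blast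
  then have "real (degree_sum F (P \<union> U))
      = real (degree_sum F P) + 2 * real (\<Sum>u\<in>P. card {v\<in>U. F u v}) + real (degree_sum F U)"
    by simp
  also have "\<dots> \<le> real p^2 + 2 * (2 * e * real a * real p^2) + (real a + 2 * e * real a^2) * real p^2"
    using D_P D_U cross by linarith
  also have "\<dots> = (real (Suc a) + 2 * e * (real a^2 + 2 * real a)) * real p^2"
    by (simp add: algebra_simps)
  also have "\<dots> \<le> (real (Suc a) + 2 * e * real (Suc a)^2) * real p^2"
    using \<open>0 \<le> e\<close> by (intro mult_right_mono add_left_mono mult_left_mono) (auto simp: power2_eq_square algebra_simps)
  finally have "sparse_set F e p (Suc a) (P \<union> U)"
    unfolding sparse_set_def using P(2) card_U \<open>finite P\<close> \<open>finite U\<close> \<open>P \<inter> U = {}\<close>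
    by (simp add: card_Un_disjoint)
  moreover have "P \<union> U \<subseteq> A \<union> B" using P(1) assms(7) by auto
  ultimately show ?thesis by blast
qed

definition colour_graph :: "(nat \<Rightarrow> nat \<Rightarrow> bool) \<Rightarrow> bool \<Rightarrow> nat \<Rightarrow> nat \<Rightarrow> bool" where
  "colour_graph E b = (if b then E else compl_graph E)"

lemma colour_graph_sym:
  assumes "\<forall>x\<in>V. \<forall>y\<in>V. E x y = E y x"
  shows "\<forall>x\<in>V. \<forall>y\<in>V. colour_graph E b x y = colour_graph E b y x"
  using assms by (auto simp: colour_graph_def compl_graph_def)

lemma sparse_pair_colour_graph:
  assumes "finite B" "sparse_pair (\<lambda>x y. E x y = b) A B e"
  shows "sparse_pair (colour_graph E b) A B e"
  by (rule sparse_pair_mono[OF assms(1) _ assms(2)]) (cases b; simp add: colour_graph_def compl_graph_def)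

lemma sparse_set_extend_colour:
  fixes E :: "nat \<Rightarrow> nat \<Rightarrow> bool" and e :: real
  assumes E_sym: "\<forall>x\<in>V. \<forall>y\<in>V. E x y = E y x" and "finite V" "A \<subseteq> V" "B \<subseteq> V"
    and "A \<inter> B = {}" "sparse_pair (\<lambda>x y. E x y = b) A B e" "0 \<le> e"
    and "U \<subseteq> A" "sparse_set (colour_graph E b) e p a U" "2 * p \<le> card B"
  shows "\<exists>U'. U' \<subseteq> A \<union> B \<and> sparse_set (colour_graph E b) e p (Suc a) U'"
proof (rule sparse_set_extend)
  show "finite A" "finite B" using assms(2-4) finite_subset by auto
  show "\<forall>x\<in>A \<union> B. \<forall>y\<in>A \<union> B. colour_graph E b x y = colour_graph E b y x"
    using colour_graph_sym[OF E_sym, of b] assms(3,4) by (meson Un_iff subsetD)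
  show "sparse_pair (colour_graph E b) A B e"
    using sparse_pair_colour_graph[OF \<open>finite B\<close> assms(6)] .
qed (use assms in auto)

definition sparse_split_property ::
  "(nat \<Rightarrow> nat \<Rightarrow> bool) \<Rightarrow> nat set \<Rightarrow> nat \<Rightarrow> real \<Rightarrow> real \<Rightarrow> bool" where
  "sparse_split_property E V p \<beta> e \<longleftrightarrow> (\<forall>W\<subseteq>V. 2 * p \<le> card W \<longrightarrow>
     (\<exists>A B b. A \<subseteq> W \<and> B \<subseteq> W \<and> A \<inter> B = {} \<and>
        \<beta> * real (card W) \<le> real (card A) \<and> \<beta> * real (card W) \<le> real (card B) \<and>
        sparse_pair (\<lambda>x y. E x y = b) A B e))"

lemma sparse_split_step:
  fixes \<beta> e :: real
  assumes "sparse_split_property E V p \<beta> e" "0 < \<beta>" "\<beta> \<le> 1"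
    and "W \<subseteq> V" "(1/\<beta>)^Suc s * (2 * real p) \<le> real (card W)"
  obtains A B b where "A \<subseteq> W" "B \<subseteq> W" "A \<inter> B = {}" "(1/\<beta>)^s * (2 * real p) \<le> real (card A)"
    "2 * p \<le> card B" "sparse_pair (\<lambda>x y. E x y = b) A B e"
proof -
  have "1 \<le> (1/\<beta>)^s" using assms(2,3) by (intro one_le_power) simp
  then have p_le: "real (2 * p) \<le> (1/\<beta>)^s * (2 * real p)"
    by (simp add: mult_le_cancel_right1)
  have W_big: "(1/\<beta>)^s * (2 * real p) \<le> \<beta> * real (card W)"
    using assms(2,5) by (simp add: field_simps)
  also have "\<dots> \<le> real (card W)" using assms(2,3) by (simp add: mult_left_le_one_le)
  finally have "2 * p \<le> card W" using p_le by linarith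
  then obtain A B b where "A \<subseteq> W" "B \<subseteq> W" "A \<inter> B = {}"
    "\<beta> * real (card W) \<le> real (card A)" "\<beta> * real (card W) \<le> real (card B)"
    "sparse_pair (\<lambda>x y. E x y = b) A B e"
    using assms(1)[unfolded sparse_split_property_def, rule_format, OF assms(4)] by blast
  moreover from this have "(1/\<beta>)^s * (2 * real p) \<le> real (card A)" "2 * p \<le> card B"
    using W_big p_le by linarith+
  ultimately show ?thesis using that by blast
qed

lemma sparse_set_in_some_colour:
  fixes E :: "nat \<Rightarrow> nat \<Rightarrow> bool" and a :: "bool \<Rightarrow> nat" and \<beta> e :: real
  assumes E_sym: "\<forall>x\<in>V. \<forall>y\<in>V. E x y = E y x" and "finite V"
    and split: "sparse_split_property E V p \<beta> e" and \<beta>: "0 < \<beta>" "\<beta> \<le> 1" and "0 \<le> e"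
    and "W \<subseteq> V" and "(1/\<beta>)^(a True + a False) * (2 * real p) \<le> real (card W)"
  shows "\<exists>b U. U \<subseteq> W \<and> sparse_set (colour_graph E b) e p (a b) U"
proof -
  have "\<exists>b U. U \<subseteq> W \<and> sparse_set (colour_graph E b) e p (a b) U"
    if "a True + a False = s" "W \<subseteq> V" "(1/\<beta>)^s * (2 * real p) \<le> real (card W)" for s a W
    using that
  proof (induction s arbitrary: a W)
    case 0
    then have "a True = 0" by simp
    then show ?case using sparse_set_empty by (intro exI[of _ True] exI[of _ "{}"]) simp
  next
    case (Suc s)
    show ?case
    proof (cases "\<exists>b. a b = 0")
      case True
      then obtain b where "a b = 0" by blast
      then show ?thesis using sparse_set_empty by (intro exI[of _ b] exI[of _ "{}"]) simp
    next
      case False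
      obtain A B b where AB: "A \<subseteq> W" "B \<subseteq> W" "A \<inter> B = {}"
        and card_A: "(1/\<beta>)^s * (2 * real p) \<le> real (card A)" and "2 * p \<le> card B"
        and sparse: "sparse_pair (\<lambda>x y. E x y = b) A B e"
        using sparse_split_step[OF split \<beta> Suc.prems(2,3)] by blast
      define a' where "a' = a(b := a b - 1)"
      have "a True \<noteq> 0" "a False \<noteq> 0" using False by auto
      then have "a' True + a' False = s" using Suc.prems(1) by (cases b) (simp_all add: a'_def)
      moreover have "A \<subseteq> V" using AB(1) Suc.prems(2) by blast
      moreover note card_A
      ultimately have "\<exists>b U. U \<subseteq> A \<and> sparse_set (colour_graph E b) e p (a' b) U"
        by (rule Suc.IH)
      then obtain b' U where U: "U \<subseteq> A" "sparse_set (colour_graph E b') e p (a' b') U"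
        by blast
      show ?thesis
      proof (cases "b' = b")
        case True
        have "B \<subseteq> V" using AB(2) Suc.prems(2) by blast
        have "sparse_set (colour_graph E b) e p (a b - 1) U" using U(2) True by (simp add: a'_def)
        then obtain U' where U': "U' \<subseteq> A \<union> B" "sparse_set (colour_graph E b) e p (Suc (a b - 1)) U'"
          using sparse_set_extend_colour[OF E_sym \<open>finite V\<close> \<open>A \<subseteq> V\<close> \<open>B \<subseteq> V\<close> AB(3) sparse
              \<open>0 \<le> e\<close> U(1) _ \<open>2 * p \<le> card B\<close>]
          by blast
        have "Suc (a b - 1) = a b" using \<open>a True \<noteq> 0\<close> \<open>a False \<noteq> 0\<close> by (cases b) auto
        moreover have "U' \<subseteq> W" using U'(1) AB(1,2) by blast
        ultimately show ?thesis using U'(2) by (intro exI[of _ b] exI[of _ U']) simp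
      next
        case False
        then have "sparse_set (colour_graph E b') e p (a b') U" using U(2) by (simp add: a'_def)
        then show ?thesis using U(1) AB(1) by (intro exI[of _ b'] exI[of _ U]) blast
      qed
    qed
  qed
  then show ?thesis using assms(7,8) by blast
qed

lemma max_deg_in_le:
  assumes "finite U" "\<And>u. u \<in> U \<Longrightarrow> real (deg_in F U u) \<le> c" "0 \<le> c"
  shows "real (max_deg_in F U) \<le> c"
proof (cases "U = {}")
  case False
  then have "max_deg_in F U \<in> deg_in F U ` U"
    unfolding max_deg_in_def using assms(1) by simp
  then show ?thesis using assms(2) by auto
qed (simp add: max_deg_in_def assms(3))

lemma max_deg_in_le_card_minus_one:
  assumes "finite U"
  shows "max_deg_in F U \<le> card U - 1"
proof -
  have "deg_in F U u \<le> card U - 1" if "u \<in> U" for u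
  proof -
    have "deg_in F U u \<le> card (U - {u})"
      unfolding deg_in_def using assms by (intro card_mono) auto
    then show ?thesis using that assms by simp
  qed
  then show ?thesis
    using max_deg_in_le[OF assms, of F "real (card U - 1)"] by simp
qed

lemma low_max_degree_subset:
  fixes F :: "nat \<Rightarrow> nat \<Rightarrow> bool" and \<theta> :: real
  assumes "finite U" "real (degree_sum F U) \<le> \<theta> * real (card U)^2" "0 \<le> \<theta>"
  shows "\<exists>U'\<subseteq>U. real (card U) \<le> 2 * real (card U') \<and> real (max_deg_in F U') \<le> 4 * \<theta> * real (card U')"
proof -
  define deg where "deg u = real (card {v\<in>U. F u v})" for u
  define U' where "U' = {u\<in>U. deg u \<le> 2 * (\<theta> * real (card U))}"
  have "(\<Sum>u\<in>U. deg u) \<le> \<theta> * real (card U) * real (card U)"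
    using assms(2) by (simp add: deg_def degree_sum_def power2_eq_square)
  then have "card U \<le> 2 * card U'"
    unfolding U'_def using assms(1) by (intro markov_half) (auto simp: deg_def)
  then have half: "real (card U) \<le> 2 * real (card U')" by linarith
  have "U' \<subseteq> U" by (auto simp: U'_def)
  have "real (deg_in F U' u) \<le> 4 * \<theta> * real (card U')" if "u \<in> U'" for u
  proof -
    have "deg_in F U' u \<le> card {v\<in>U. F u v}"
      unfolding deg_in_def using assms(1) \<open>U' \<subseteq> U\<close> by (intro card_mono) auto
    then have "real (deg_in F U' u) \<le> deg u" by (simp add: deg_def)
    also have "\<dots> \<le> 2 * (\<theta> * real (card U))" using that by (simp add: U'_def)
    also have "\<dots> \<le> 4 * \<theta> * real (card U')" using mult_left_mono[OF half assms(3)] by (simp add: algebra_simps)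
    finally show ?thesis .
  qed
  then have "real (max_deg_in F U') \<le> 4 * \<theta> * real (card U')"
    using assms(1,3) \<open>U' \<subseteq> U\<close> finite_subset by (intro max_deg_in_le) auto
  then show ?thesis using \<open>U' \<subseteq> U\<close> half by blast
qed

lemma bounded_degree_set_in_H_free:
  fixes e \<delta> :: real
  assumes "ograph n EG" and "ograph k EH" and "\<not> induced_ord_sub k EH n EG"
    and "0 < k" and e: "0 < e" "e \<le> 1" and "0 < A0" and \<delta>: "4 * (1 / real A0 + 2 * e) \<le> \<delta>"
    and "k \<le> p" and n: "2 * real p \<le> (e^k / (2 * real k^2))^(2 * A0) * real n"
  shows "\<exists>U\<subseteq>{0..<n}. real p \<le> 2 * real (card U) \<and>
    (real (max_deg_in EG U) \<le> \<delta> * real (card U) \<or> real (max_deg_in (compl_graph EG) U) \<le> \<delta> * real (card U))"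
proof -
  define \<beta> where "\<beta> = e^k / (2 * real k^2)"
  have "0 < \<beta>" unfolding \<beta>_def using e \<open>0 < k\<close> by simp
  have "1 \<le> real k^2" using \<open>0 < k\<close> by (simp add: one_le_power)
  moreover have "e^k \<le> 1" using e by (simp add: power_le_one)
  ultimately have "\<beta> \<le> 1" unfolding \<beta>_def by (simp add: divide_le_eq)
  have EG_sym: "\<forall>x\<in>{0..<n}. \<forall>y\<in>{0..<n}. EG x y = EG y x"
    using assms(1) by (rule ograph_sym) simp
  have split: "sparse_split_property EG {0..<n} p \<beta> e"
    unfolding sparse_split_property_def \<beta>_def
    using sparse_pair_in_H_free[OF assms(1-3) _ \<open>0 < k\<close> e] \<open>k \<le> p\<close> by simp
  have "(1/\<beta>)^(A0 + A0) * (2 * real p) = 2 * real p / \<beta>^(2 * A0)"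
    unfolding power_one_over mult_2 by simp
  also have "\<dots> \<le> real (card {0..<n})"
    using n[folded \<beta>_def] \<open>0 < \<beta>\<close> by (simp add: pos_divide_le_eq mult.commute)
  finally have "(1/\<beta>)^(A0 + A0) * (2 * real p) \<le> real (card {0..<n})" .
  then obtain b U where U: "U \<subseteq> {0..<n}" "sparse_set (colour_graph EG b) e p A0 U"
    using sparse_set_in_some_colour[where a = "\<lambda>_. A0" and p = p, OF EG_sym finite_atLeastLessThan split
        \<open>0 < \<beta>\<close> \<open>\<beta> \<le> 1\<close> _ subset_refl] e by auto
  define \<theta> where "\<theta> = 1 / real A0 + 2 * e"
  have "0 \<le> \<theta>" unfolding \<theta>_def using e by simp
  have card_U: "card U = A0 * p" using U(2) by (simp add: sparse_set_def)
  have "real (degree_sum (colour_graph EG b) U) \<le> (real A0 + 2 * e * real A0^2) * real p^2"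
    using U(2) by (simp add: sparse_set_def)
  also have "\<dots> = \<theta> * real (card U)^2"
    using \<open>0 < A0\<close> card_U by (simp add: \<theta>_def power2_eq_square field_simps)
  finally have "real (degree_sum (colour_graph EG b) U) \<le> \<theta> * real (card U)^2" .
  moreover have "finite U" using U(1) by (rule finite_subset) simp
  ultimately obtain U' where U': "U' \<subseteq> U" "real (card U) \<le> 2 * real (card U')"
    "real (max_deg_in (colour_graph EG b) U') \<le> 4 * \<theta> * real (card U')"
    using low_max_degree_subset[OF _ _ \<open>0 \<le> \<theta>\<close>] by blast
  have "real (max_deg_in (colour_graph EG b) U') \<le> \<delta> * real (card U')"
    using U'(3) mult_right_mono[OF \<delta>[folded \<theta>_def], of "real (card U')"] by simp
  moreover have "p \<le> card U" using card_U \<open>0 < A0\<close> by simp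
  ultimately show ?thesis
    using U(1) U'(1,2) by (intro exI[of _ U']) (cases b; auto simp: colour_graph_def)
qed

lemma small_set_bounded_degree:
  assumes "c * real n \<le> 1" "0 \<le> \<delta>"
  shows "\<exists>U\<subseteq>{0..<n}. c * real n \<le> real (card U) \<and> real (max_deg_in E U) \<le> \<delta> * real (card U)"
proof -
  define U where "U = {0..<min n 1}"
  have "max_deg_in E U = 0" using max_deg_in_le_card_minus_one[of U E] by (simp add: U_def)
  moreover have "c * real n \<le> real (card U)" using assms(1) by (cases n) (auto simp: U_def)
  ultimately show ?thesis using assms(2) by (intro exI[of _ U]) (auto simp: U_def)
qed

lemma degree_parameters_exist:
  assumes "0 < \<delta>"
  shows "\<exists>e A0. 0 < e \<and> e \<le> 1 \<and> 0 < A0 \<and> 4 * (1 / real A0 + 2 * e) \<le> \<delta>"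
proof (intro exI conjI)
  define A0 where "A0 = nat \<lceil>8 / \<delta>\<rceil>"
  have "8 / \<delta> \<le> real A0" unfolding A0_def by linarith
  moreover have "0 < 8 / \<delta>" using assms by simp
  ultimately show "0 < A0" by linarith
  have "8 \<le> \<delta> * real A0" using \<open>8 / \<delta> \<le> real A0\<close> assms by (simp add: divide_le_eq mult.commute)
  then have "4 * (1 / real A0) \<le> \<delta> / 2" using \<open>0 < A0\<close> by (simp add: divide_le_eq mult.commute)
  moreover have "min (\<delta> / 16) 1 \<le> \<delta> / 16" by simp
  ultimately show "4 * (1 / real A0 + 2 * min (\<delta> / 16) 1) \<le> \<delta>"
    unfolding distrib_left by linarith
qed (use assms in auto)

lemma bounded_degree_set_of_linear_size:
  fixes e \<delta> :: real
  assumes G: "ograph n EG" "\<not> induced_ord_sub k EH n EG" and "ograph k EH" "0 < k"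
    and par: "0 < e" "e \<le> 1" "0 < A0" "4 * (1 / real A0 + 2 * e) \<le> \<delta>"
  defines "\<gamma> \<equiv> (e^k / (2 * real k^2))^(2 * A0)"
  shows "\<exists>U\<subseteq>{0..<n}. \<gamma> / (8 * (real k + 1)) * real n \<le> real (card U) \<and>
    (real (max_deg_in EG U) \<le> \<delta> * real (card U) \<or> real (max_deg_in (compl_graph EG) U) \<le> \<delta> * real (card U))"
proof -
  have "0 < \<gamma>" unfolding \<gamma>_def using par(1) \<open>0 < k\<close> by simp
  define p where "p = nat \<lfloor>\<gamma> * real n / 2\<rfloor>"
  have "real p = of_int \<lfloor>\<gamma> * real n / 2\<rfloor>" unfolding p_def using \<open>0 < \<gamma>\<close> by simp
  then have p: "2 * real p \<le> \<gamma> * real n" "\<gamma> * real n < 2 * real p + 2"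
    using of_int_floor_le[of "\<gamma> * real n / 2"] real_of_int_floor_add_one_gt[of "\<gamma> * real n / 2"]
    by linarith+
  show ?thesis
  proof (cases "k \<le> p")
    case True
    have "\<gamma> / (8 * (real k + 1)) * real n = \<gamma> * real n / (8 * (real k + 1))" by simp
    also have "\<dots> \<le> \<gamma> * real n / 8"
      by (rule divide_left_mono) (use \<open>0 < \<gamma>\<close> in auto)
    also have "\<dots> \<le> real p / 2" using p(2) \<open>k \<le> p\<close> \<open>0 < k\<close> by simp
    finally have c_le: "\<gamma> / (8 * (real k + 1)) * real n \<le> real p / 2" .
    obtain U where U: "U \<subseteq> {0..<n}" "real p \<le> 2 * real (card U)"
      "real (max_deg_in EG U) \<le> \<delta> * real (card U) \<or> real (max_deg_in (compl_graph EG) U) \<le> \<delta> * real (card U)"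
      using bounded_degree_set_in_H_free[OF G(1) assms(3) G(2) \<open>0 < k\<close> par True p(1)[unfolded \<gamma>_def]]
      by auto
    moreover have "\<gamma> / (8 * (real k + 1)) * real n \<le> real (card U)" using c_le U(2) by linarith
    ultimately show ?thesis by blast
  next
    case False
    then have "real p + 1 \<le> real k" by simp
    then have "\<gamma> * real n \<le> 8 * (real k + 1)" using p(2) by simp
    then have "\<gamma> / (8 * (real k + 1)) * real n \<le> 1" by (simp add: pos_divide_le_eq)
    moreover have "0 \<le> \<delta>"
      using par(4) add_pos_pos[OF divide_pos_pos[of 1 "real A0"], of "2 * e"] par(1,3) by simp
    ultimately have "\<exists>U\<subseteq>{0..<n}. \<gamma> / (8 * (real k + 1)) * real n \<le> real (card U) \<and>
        real (max_deg_in EG U) \<le> \<delta> * real (card U)"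
      by (rule small_set_bounded_degree)
    then show ?thesis by blast
  qed
qed

theorem corollary12:
  fixes k :: nat and EH :: "nat \<Rightarrow> nat \<Rightarrow> bool" and \<delta> :: real
  assumes "ograph k EH" and "\<delta> > 0"
  shows "\<exists>c2::real. c2 > 0 \<and>
    (\<forall>n EG. ograph n EG \<longrightarrow> \<not> induced_ord_sub k EH n EG \<longrightarrow>
      (\<exists>U. U \<subseteq> {0..<n} \<and> real (card U) \<ge> c2 * real n \<and>
           (real (max_deg_in EG U) \<le> \<delta> * real (card U) \<or>
            real (max_deg_in (compl_graph EG) U) \<le> \<delta> * real (card U))))"
proof (cases "k = 0")
  case True
  then have "induced_ord_sub k EH n EG" for n EG by (simp add: induced_ord_sub_def)
  then show ?thesis by (intro exI[of _ 1]) auto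
next
  case False
  obtain e A0 where par: "0 < e" "e \<le> 1" "0 < A0" "4 * (1 / real A0 + 2 * e) \<le> \<delta>"
    using degree_parameters_exist[OF assms(2)] by blast
  define c2 where "c2 = (e^k / (2 * real k^2))^(2 * A0) / (8 * (real k + 1))"
  have "0 < c2" unfolding c2_def using par(1) False by simp
  moreover have "\<exists>U\<subseteq>{0..<n}. c2 * real n \<le> real (card U) \<and>
      (real (max_deg_in EG U) \<le> \<delta> * real (card U) \<or> real (max_deg_in (compl_graph EG) U) \<le> \<delta> * real (card U))"
    if "ograph n EG" "\<not> induced_ord_sub k EH n EG" for n EG
    unfolding c2_def using bounded_degree_set_of_linear_size[OF that assms(1) _ par] False by simp
  ultimately show ?thesis by blast
qed

end
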